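(* For all $A\in\mathrm{M}_2(E_0)$ and $B\in\mathrm{M}_2(E_1)$, \[\Big\{\tfrac12\mathrm{tr}(B)\mathrm{tr}(A)+\tfrac12\mathrm{tr}(A)\mathrm{tr}(B)-\tfrac12\mathrm{tr}(AB)-\tfrac12\mathrm{tr}(BA)\Big\}I_2-\mathrm{tr}(B)A-\mathrm{tr}(A)B+AB+BA=0.\]
   Context: $K$ is a field of characteristic zero. $E$ is the infinite-dimensional Grassmann (exterior) algebra over $K$, generated by countably many indeterminates $v_1,v_2,\dots$ subject to $v_iv_j+v_jv_i=0$ for all $i,j$. $E=E_0\oplus E_1$ is its natural $\mathbb{Z}_2$-grading: $E_0$ (resp. $E_1$) is the $K$-span of products of an even (resp. odd) number of generators; $E_0$ is commutative and central in $E$. $\mathrm{M}_n(R)$ denotes the $n\times n$ matrices over $R$, $I_2$ the $2\times2$ identity matrix, and $\mathrm{tr}$ the sum of diagonal entries. *)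

theory Defs
  imports Main
begin

text \<open>The infinite Grassmann algebra E over a field 'k, generated by v_0, v_1, ...
  An element is a function from (finite) sets S of generator indices to 'k,
  x S being the coefficient of the monomial v_S = v_{s1} ... v_{sm} (s1 < ... < sm),
  with finitely many nonzero coefficients.\<close>

type_synonym 'k grass = "nat set \<Rightarrow> 'k"

definition grass :: "'k::field grass set" where
  "grass = {x. finite {S. x S \<noteq> 0} \<and> (\<forall>S. x S \<noteq> 0 \<longrightarrow> finite S)}"

definition grass0 :: "'k::field grass set" where
  "grass0 = {x \<in> grass. \<forall>S. x S \<noteq> 0 \<longrightarrow> even (card S)}"

definition grass1 :: "'k::field grass set" where
  "grass1 = {x \<in> grass. \<forall>S. x S \<noteq> 0 \<longrightarrow> odd (card S)}"

text \<open>Sign of v_S v_T = gsign S T v_{S \<union> T} for disjoint S, T: number of inversions.\<close>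
definition gsign :: "nat set \<Rightarrow> nat set \<Rightarrow> 'k::field" where
  "gsign S T = (-1) ^ card {(s, t). s \<in> S \<and> t \<in> T \<and> t < s}"

definition gadd :: "'k::field grass \<Rightarrow> 'k grass \<Rightarrow> 'k grass" where
  "gadd x y = (\<lambda>U. x U + y U)"

definition gsub :: "'k::field grass \<Rightarrow> 'k grass \<Rightarrow> 'k grass" where
  "gsub x y = (\<lambda>U. x U - y U)"

definition gscale :: "'k::field \<Rightarrow> 'k grass \<Rightarrow> 'k grass" where
  "gscale c x = (\<lambda>U. c * x U)"

definition gzero :: "'k::field grass" where
  "gzero = (\<lambda>U. 0)"

definition gone :: "'k::field grass" where
  "gone = (\<lambda>U. if U = {} then 1 else 0)"

definition gmult :: "'k::field grass \<Rightarrow> 'k grass \<Rightarrow> 'k grass" where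
  "gmult x y = (\<lambda>U. if finite U then
      (\<Sum>S\<in>Pow U. gsign S (U - S) * x S * y (U - S)) else 0)"

text \<open>2x2 matrices over E: functions on indices, only i, j \<in> {0,1} are relevant.\<close>
type_synonym 'k gmat = "nat \<Rightarrow> nat \<Rightarrow> 'k grass"

definition gmat_in :: "'k::field gmat \<Rightarrow> 'k grass set \<Rightarrow> bool" where
  "gmat_in A R \<longleftrightarrow> (\<forall>i<2. \<forall>j<2. A i j \<in> R)"

definition gmmult :: "'k::field gmat \<Rightarrow> 'k gmat \<Rightarrow> 'k gmat" where
  "gmmult A B = (\<lambda>i j. gadd (gmult (A i 0) (B 0 j)) (gmult (A i 1) (B 1 j)))"

definition gtr :: "'k::field gmat \<Rightarrow> 'k grass" where
  "gtr A = gadd (A 0 0) (A 1 1)"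

definition gid :: "'k::field gmat" where
  "gid = (\<lambda>i j. if i = j then gone else gzero)"

definition gmat_add :: "'k::field gmat \<Rightarrow> 'k gmat \<Rightarrow> 'k gmat" where
  "gmat_add A B = (\<lambda>i j. gadd (A i j) (B i j))"

definition gmat_sub :: "'k::field gmat \<Rightarrow> 'k gmat \<Rightarrow> 'k gmat" where
  "gmat_sub A B = (\<lambda>i j. gsub (A i j) (B i j))"

definition gmat_smult :: "'k::field grass \<Rightarrow> 'k gmat \<Rightarrow> 'k gmat" where
  "gmat_smult c A = (\<lambda>i j. gmult c (A i j))"

definition gmat_eq :: "'k::field gmat \<Rightarrow> 'k gmat \<Rightarrow> bool" where
  "gmat_eq A B \<longleftrightarrow> (\<forall>i<2. \<forall>j<2. A i j = B i j)"

end

theory Submission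
  imports Defs
begin

text \<open>Moving a monomial of even degree past any other monomial produces no sign, so the even
  part E_0 is central in E. The entries of A therefore commute with everything, and the
  identity is the polarization, at X = A + B, of the Cayley--Hamilton identity
  X^2 - tr(X) X + det(X) I_2 = 0 for 2x2 matrices over a commutative ring, where
  2 det(X) = tr(X)^2 - tr(X^2). Over the central entries of A it can be checked entrywise.\<close>

lemma gsign_swap_even:
  assumes "finite S" and "finite T" and "S \<inter> T = {}" and "even (card T)"
  shows "(gsign S T :: 'k::field) = gsign T S"
proof -
  define I where "I = {(s, t). s \<in> S \<and> t \<in> T \<and> t < s}"
  define J where "J = {(s, t). s \<in> S \<and> t \<in> T \<and> s < t}"
  have card_swap: "card {(t, s). t \<in> T \<and> s \<in> S \<and> s < t} = card J"
  proof -
    have "{(t, s). t \<in> T \<and> s \<in> S \<and> s < t} = (\<lambda>(s, t). (t, s)) ` J"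
      unfolding J_def by auto
    moreover have "inj_on (\<lambda>(s, t). (t, s)) J" by (auto simp: inj_on_def)
    ultimately show ?thesis by (simp add: card_image)
  qed
  have "I \<union> J = S \<times> T" and "I \<inter> J = {}"
    unfolding I_def J_def using assms(3) by auto
  moreover have "finite I" "finite J"
    using assms(1,2) unfolding I_def J_def by (auto intro: finite_subset[of _ "S \<times> T"])
  ultimately have "card I + card J = card S * card T"
    by (metis card_Un_disjoint card_cartesian_product)
  with assms(4) have "even (card I + card J)" by simp
  hence "even (card I) = even (card J)" by simp
  hence "(-1::'k) ^ card I = (-1) ^ card J"
    by (cases "even (card J)") (auto simp: neg_one_even_power neg_one_odd_power)
  thus ?thesis unfolding gsign_def I_def[symmetric] card_swap by simp
qed

lemma gmult_grass0_commute:
  assumes x: "x \<in> grass0"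
  shows "gmult y x = gmult x y"
proof
  fix U :: "nat set"
  show "gmult y x U = gmult x y U"
  proof (cases "finite U")
    case False
    thus ?thesis by (simp add: gmult_def)
  next
    case True
    have "gmult y x U = (\<Sum>T\<in>Pow U. gsign (U - T) (U - (U - T)) * y (U - T) * x (U - (U - T)))"
      unfolding gmult_def if_P[OF True]
      by (rule sum.reindex_bij_witness[where i="\<lambda>S. U - S" and j="\<lambda>S. U - S"])
        (auto simp: Diff_Diff_Int Int_absorb1)
    also have "\<dots> = (\<Sum>T\<in>Pow U. gsign T (U - T) * x T * y (U - T))"
    proof (rule sum.cong)
      fix T assume T: "T \<in> Pow U"
      hence compl: "U - (U - T) = T" by auto
      show "gsign (U - T) (U - (U - T)) * y (U - T) * x (U - (U - T))
          = gsign T (U - T) * x T * y (U - T)"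
      proof (cases "x T = 0")
        case False
        hence "even (card T)" using x by (auto simp: grass0_def)
        moreover have "finite T" using T True by (auto intro: finite_subset)
        ultimately have "gsign (U - T) T = (gsign T (U - T) :: 'a)"
          using True by (intro gsign_swap_even) auto
        thus ?thesis using compl by simp
      qed (simp add: compl)
    qed simp
    also have "\<dots> = gmult x y U" using True by (simp add: gmult_def)
    finally show ?thesis .
  qed
qed

lemma gsign_empty_right: "gsign S {} = 1"
  by (simp add: gsign_def)

lemma gmult_infinite: "infinite U \<Longrightarrow> gmult x y U = 0"
  by (simp add: gmult_def)

text \<open>The hypothesis excludes junk coefficients on infinite sets, which the product discards.\<close>
lemma gmult_gone_right:
  assumes "\<And>U. infinite U \<Longrightarrow> x U = 0"
  shows "gmult x gone = x"
proof
  fix U :: "nat set"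
  show "gmult x gone U = x U"
  proof (cases "finite U")
    case True
    have "gmult x gone U = (\<Sum>S\<in>Pow U. if S = U then x U else 0)"
      unfolding gmult_def gone_def if_P[OF True]
      by (rule sum.cong) (auto simp: Diff_eq_empty_iff gsign_empty_right)
    also have "\<dots> = x U" using True by simp
    finally show ?thesis .
  qed (simp add: gmult_def assms)
qed

lemma gmult_gmult_gone: "gmult (gmult x y) gone = gmult x y"
  by (rule gmult_gone_right) (rule gmult_infinite)

lemma gmult_gzero_right: "gmult x gzero = gzero"
  by (auto simp: gmult_def gzero_def)

lemma gmult_distribs:
  "gmult (gadd x y) z = gadd (gmult x z) (gmult y z)"
  "gmult z (gadd x y) = gadd (gmult z x) (gmult z y)"
  "gmult (gsub x y) z = gsub (gmult x z) (gmult y z)"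
  "gmult z (gsub x y) = gsub (gmult z x) (gmult z y)"
  "gmult (gscale c x) z = gscale c (gmult x z)"
  "gmult z (gscale c x) = gscale c (gmult z x)"
  by (auto simp: gmult_def gadd_def gsub_def gscale_def sum.distrib sum_subtractf
      sum_distrib_left algebra_simps intro!: sum.cong)

definition cayley_hamilton_polarization :: "'k::field gmat \<Rightarrow> 'k gmat \<Rightarrow> 'k gmat" where
  "cayley_hamilton_polarization A B =
    gmat_add (gmat_add (gmat_sub (gmat_sub
       (gmat_smult
          (gsub (gsub (gadd (gscale (1/2) (gmult (gtr B) (gtr A)))
                            (gscale (1/2) (gmult (gtr A) (gtr B))))
                      (gscale (1/2) (gtr (gmmult A B))))
                (gscale (1/2) (gtr (gmmult B A))))
          gid)
       (gmat_smult (gtr B) A))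
       (gmat_smult (gtr A) B))
       (gmmult A B))
       (gmmult B A)"

lemma cayley_hamilton_polarization_central:
  fixes A B :: "'k::field_char_0 gmat"
  assumes central: "\<And>i j y. i < 2 \<Longrightarrow> j < 2 \<Longrightarrow> gmult y (A i j) = gmult (A i j) y"
  shows "gmat_eq (cayley_hamilton_polarization A B) (\<lambda>i j. gzero)"
  unfolding gmat_eq_def
proof (intro allI impI)
  fix i j :: nat
  assume "i < 2" "j < 2"
  then consider "i = 0" "j = 0" | "i = 0" "j = 1" | "i = 1" "j = 0" | "i = 1" "j = 1"
    by fastforce
  then show "cayley_hamilton_polarization A B i j = gzero"
    unfolding cayley_hamilton_polarization_def gmat_add_def gmat_sub_def gmat_smult_def gid_def
      gmmult_def gtr_def
    by cases (simp only: if_True if_False rel_simps gmult_distribs gmult_gmult_gone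
        gmult_gzero_right central[of 0 0] central[of 0 1] central[of 1 0] central[of 1 1],
        simp add: gadd_def gsub_def gscale_def gzero_def fun_eq_iff field_simps)+
qed

theorem corollary2p2:
  fixes A B :: "'k::field_char_0 gmat"
  assumes "gmat_in A grass0" and "gmat_in B grass1"
  shows "gmat_eq
    (gmat_add (gmat_add (gmat_sub (gmat_sub
       (gmat_smult
          (gsub (gsub (gadd (gscale (1/2) (gmult (gtr B) (gtr A)))
                            (gscale (1/2) (gmult (gtr A) (gtr B))))
                      (gscale (1/2) (gtr (gmmult A B))))
                (gscale (1/2) (gtr (gmmult B A))))
          gid)
       (gmat_smult (gtr B) A))
       (gmat_smult (gtr A) B))
       (gmmult A B))
       (gmmult B A))
    (\<lambda>i j. gzero)"
proof -
  have "gmult y (A i j) = gmult (A i j) y" if "i < 2" "j < 2" for i j y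
    using assms(1) that by (intro gmult_grass0_commute) (auto simp: gmat_in_def)
  from cayley_hamilton_polarization_central[OF this] show ?thesis
    unfolding cayley_hamilton_polarization_def .
qed

end
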